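(* Let $f,g\in H$ have a common fixed point $p\in\mathbb{P}^1$. Then every element of the second derived subgroup $\langle f,g\rangle''$ of the subgroup $\langle f,g\rangle<H$ generated by $f$ and $g$ acts trivially on some neighbourhood of $p$.
   Context: Let $\mathbb{P}^1=\mathbb{P}^1(\mathbb{R})$ with its usual topology (a circle) and the natural action of $\mathrm{PSL}_2(\mathbb{R})$. Let $G$ be the group of homeomorphisms of $\mathbb{P}^1$ which are piecewise in $\mathrm{PSL}_2(\mathbb{R})$ with finitely many pieces, each an interval of $\mathbb{P}^1$. Let $\infty\in\mathbb{P}^1$ be the point corresponding to the first basis vector of $\mathbb{R}^2$ and $H<G$ the stabilizer of $\infty$. For a group $J$, $J''$ denotes $[J',J']$ where $J'=[J,J]$. *)

theory Defs
  imports "HOL-Analysis.Analysis" "HOL-Algebra.Solvable_Groups" "HOL-Algebra.Bij"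
begin

text \<open>Model of P^1(R): the type real option. Some x is the line [x:1];
  None is the line [1:0] spanned by the first basis vector, i.e. infinity.\<close>

type_synonym P1 = "real option"

definition P1inf :: P1 where "P1inf = None"

text \<open>Second affine chart: x maps to the line [1:x].\<close>
definition chart2 :: "real \<Rightarrow> P1" where
  "chart2 x = (if x = 0 then None else Some (1 / x))"

definition P1open :: "P1 set \<Rightarrow> bool" where
  "P1open U \<longleftrightarrow> open (Some -` U) \<and> open (chart2 -` U)"

lemma istopology_P1open: "istopology P1open"
  unfolding istopology_def P1open_def
  by (auto simp: vimage_Int vimage_Union open_Int intro!: open_Union)

definition P1top :: "P1 topology" where
  "P1top = topology P1open"

text \<open>Action of the matrix ((a,b),(c,d)) on P^1: [x:y] maps to [ax+by : cx+dy].\<close>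
definition mobius :: "real \<Rightarrow> real \<Rightarrow> real \<Rightarrow> real \<Rightarrow> P1 \<Rightarrow> P1" where
  "mobius a b c d p = (case p of
      None \<Rightarrow> (if c = 0 then None else Some (a / c))
    | Some x \<Rightarrow> (if c * x + d = 0 then None else Some ((a * x + b) / (c * x + d))))"

definition PSL2 :: "(P1 \<Rightarrow> P1) set" where
  "PSL2 = {mobius a b c d | a b c d. a * d - b * c = 1}"

definition P1interval :: "P1 set \<Rightarrow> bool" where
  "P1interval I \<longleftrightarrow> connectedin P1top I"

definition PPgroup :: "(P1 \<Rightarrow> P1) set" where
  "PPgroup = {f. homeomorphic_map P1top P1top f \<and>
     (\<exists>\<I>. finite \<I> \<and> \<Union>\<I> = UNIV \<and>
        (\<forall>I\<in>\<I>. P1interval I \<and> (\<exists>\<phi>\<in>PSL2. \<forall>x\<in>I. f x = \<phi> x)))}"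

definition Hgroup :: "(P1 \<Rightarrow> P1) set" where
  "Hgroup = {f \<in> PPgroup. f P1inf = P1inf}"

abbreviation SymP1 where "SymP1 \<equiv> BijGroup (UNIV :: P1 set)"

end

theory Submission
  imports Defs
begin

text \<open>Work in a projective coordinate \<open>t\<close> centred at the common fixed point \<open>p\<close>. An element
  of \<open>G\<close> fixing \<open>p\<close> agrees, on each side of \<open>p\<close>, with one of its finitely many pieces (the
  pieces are connected and cover the circle), and continuity at \<open>p\<close> forces that piece to fix
  \<open>p\<close>. So its one-sided germs are \<open>t \<mapsto> A t / (C t + D)\<close> with \<open>A D = 1\<close>, i.e. lie in the
  group of lower triangular matrices. Commutators there are unipotent, and unipotent matrices
  commute, so second commutators have trivial germs on both sides of \<open>p\<close>.\<close>

lemma carrier_SymP1: "carrier SymP1 = {h. bij h}"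
  by (auto simp: BijGroup_def Bij_def)

lemma mult_SymP1: "bij h \<Longrightarrow> bij k \<Longrightarrow> h \<otimes>\<^bsub>SymP1\<^esub> k = h \<circ> k"
  by (auto simp: BijGroup_def Bij_def compose_def fun_eq_iff)

lemma one_SymP1: "\<one>\<^bsub>SymP1\<^esub> = id"
  by (auto simp: BijGroup_def fun_eq_iff)

lemma inv_SymP1: "bij h \<Longrightarrow> inv\<^bsub>SymP1\<^esub> h = inv_into UNIV h"
  by (subst inv_BijGroup) (auto simp: Bij_def fun_eq_iff)

lemma subgroup_SymP1I:
  assumes "\<And>h. h \<in> K \<Longrightarrow> bij h" "\<And>h k. h \<in> K \<Longrightarrow> k \<in> K \<Longrightarrow> h \<circ> k \<in> K"
    and "id \<in> K" "\<And>h. h \<in> K \<Longrightarrow> inv_into UNIV h \<in> K"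
  shows "subgroup K SymP1"
  by (rule subgroup.intro) (use assms in \<open>auto simp: carrier_SymP1 mult_SymP1 one_SymP1 inv_SymP1\<close>)

lemma bij_inv_into_fixed: "bij h \<Longrightarrow> h x = x \<Longrightarrow> inv_into UNIV h x = x"
  by (metis bij_def inv_f_eq)

lemma derived_SymP1_subset:
  assumes "\<And>h. h \<in> S \<Longrightarrow> bij h"
    and "\<And>x y. x \<in> S \<Longrightarrow> y \<in> S \<Longrightarrow> x \<circ> y \<circ> inv_into UNIV x \<circ> inv_into UNIV y \<in> K"
    and "subgroup K SymP1"
  shows "derived SymP1 S \<subseteq> K"
  unfolding derived_def
proof (rule group.generate_subgroup_incl[OF group_BijGroup _ assms(3)])
  show "derived_set SymP1 S \<subseteq> K"
  proof
    fix z assume "z \<in> derived_set SymP1 S"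
    then obtain x y where xy: "x \<in> S" "y \<in> S"
      and z: "z = x \<otimes>\<^bsub>SymP1\<^esub> y \<otimes>\<^bsub>SymP1\<^esub> inv\<^bsub>SymP1\<^esub> x \<otimes>\<^bsub>SymP1\<^esub> inv\<^bsub>SymP1\<^esub> y"
      by blast
    have "bij x" "bij y" using xy assms(1) by auto
    then have "z = x \<circ> y \<circ> inv_into UNIV x \<circ> inv_into UNIV y"
      by (simp add: z mult_SymP1 inv_SymP1 bij_comp bij_imp_bij_inv)
    then show "z \<in> K" using assms(2)[OF xy] by simp
  qed
qed

lemma openin_P1top: "openin P1top U \<longleftrightarrow> P1open U"
  by (simp add: P1top_def topology_inverse' istopology_P1open)

lemma topspace_P1top: "topspace P1top = UNIV"
  unfolding topspace_def openin_P1top by (auto simp: P1open_def intro!: exI[of _ UNIV])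

lemma open_inverse_vimage: "open V \<Longrightarrow> open {x::real. x \<noteq> 0 \<and> 1/x \<in> V}"
proof -
  assume "open V"
  moreover have "continuous_on (-{0}) (\<lambda>x::real. 1/x)" by (intro continuous_intros) auto
  ultimately have "open ((\<lambda>x::real. 1/x) -` V \<inter> -{0})"
    using continuous_on_open_vimage[of "-{0}" "\<lambda>x::real. 1/x"] by auto
  moreover have "{x::real. x \<noteq> 0 \<and> 1/x \<in> V} = (\<lambda>x::real. 1/x) -` V \<inter> -{0}" by auto
  ultimately show ?thesis by simp
qed

lemma openin_P1top_Some_image: "open V \<Longrightarrow> openin P1top (Some ` V)"
proof -
  assume V: "open V"
  have "Some -` Some ` V = V" by auto
  moreover have "chart2 -` Some ` V = {x. x \<noteq> 0 \<and> 1/x \<in> V}"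
    by (auto simp: chart2_def split: if_splits)
  ultimately show ?thesis using V open_inverse_vimage[OF V]
    by (simp add: openin_P1top P1open_def)
qed

lemma openin_P1top_compl_Some_image:
  assumes "closed C" "bounded C"
  shows "openin P1top (- Some ` C)"
proof -
  obtain M where M: "M > 0" "\<forall>y\<in>C. \<bar>y\<bar> \<le> M" using assms(2) bounded_pos real_norm_def by metis
  have "chart2 -` (- Some ` C) = ball 0 (1/M) \<union> {x. x \<noteq> 0 \<and> 1/x \<in> -C}"
  proof (rule Set.set_eqI, rule iffI)
    fix x assume "x \<in> chart2 -` (- Some ` C)"
    then show "x \<in> ball 0 (1/M) \<union> {x. x \<noteq> 0 \<and> 1/x \<in> -C}"
      using M(1) by (cases "x = 0") (auto simp: chart2_def)
  next
    fix x assume x: "x \<in> ball 0 (1/M) \<union> {x. x \<noteq> 0 \<and> 1/x \<in> -C}"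
    show "x \<in> chart2 -` (- Some ` C)"
    proof (cases "x = 0")
      case False
      have "1/x \<notin> C"
      proof (cases "x \<in> ball 0 (1/M)")
        case True
        then have "\<bar>x\<bar> < 1/M" by simp
        then have "M < \<bar>1/x\<bar>" using False M(1)
          using less_imp_inverse_less[of "\<bar>x\<bar>" "1/M"] by (simp add: abs_divide inverse_eq_divide)
        then show ?thesis using M(2) by force
      qed (use x in auto)
      then show ?thesis using False by (auto simp: chart2_def)
    qed (auto simp: chart2_def)
  qed
  moreover have "Some -` (- Some ` C) = - C" by auto
  moreover have "open {x::real. x \<noteq> 0 \<and> 1/x \<in> -C}" using assms(1) by (intro open_inverse_vimage) auto
  ultimately show ?thesis using assms(1)
    by (simp add: openin_P1top P1open_def open_Un open_Compl)
qed

text \<open>\<open>chart_at p\<close> is itself projective, so in this coordinate projective maps stay fractional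
  linear.\<close>

definition chart_coord :: "P1 \<Rightarrow> real \<Rightarrow> real" where
  "chart_coord p t = (case p of Some x0 \<Rightarrow> x0 + t | None \<Rightarrow> -1/t)"

definition chart_at :: "P1 \<Rightarrow> real \<Rightarrow> P1" where
  "chart_at p t = (if t = 0 then p else Some (chart_coord p t))"

lemma chart_at_0 [simp]: "chart_at p 0 = p"
  by (simp add: chart_at_def)

lemma chart_at_Some [simp]: "chart_at (Some x0) t = Some (x0 + t)"
  by (simp add: chart_at_def chart_coord_def)

lemma chart_at_None [simp]: "chart_at None t = (if t = 0 then None else Some (-1/t))"
  by (simp add: chart_at_def chart_coord_def)

lemma chart_at_nonzero: "t \<noteq> 0 \<Longrightarrow> chart_at p t = Some (chart_coord p t)"
  by (simp add: chart_at_def)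

lemma chart_coord_less:
  assumes "a < b" "0 < a \<or> b < 0"
  shows "chart_coord p a < chart_coord p b"
proof (cases p)
  case None
  have "inverse b < inverse a"
    using assms less_imp_inverse_less less_imp_inverse_less_neg by blast
  then show ?thesis using None by (simp add: chart_coord_def inverse_eq_divide)
qed (use assms in \<open>auto simp: chart_coord_def\<close>)

lemma eventually_chart_at_in:
  assumes U: "openin P1top U" "p \<in> U"
  shows "eventually (\<lambda>t. chart_at p t \<in> U) (at 0)"
proof (cases p)
  case None
  have "open (chart2 -` U)" "0 \<in> chart2 -` U"
    using U None by (auto simp: openin_P1top P1open_def chart2_def)
  then obtain e where e: "e > 0" "ball 0 e \<subseteq> chart2 -` U" by (meson open_contains_ball)
  have "chart_at p t \<in> U" if "t \<noteq> 0" "\<bar>t\<bar> < e" for t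
  proof -
    have "-t \<in> ball 0 e" using that by simp
    then have "chart2 (-t) \<in> U" using e(2) by blast
    then show ?thesis using that None by (simp add: chart2_def)
  qed
  then show ?thesis using e(1) unfolding eventually_at by (auto simp: dist_norm)
next
  case (Some x0)
  have "open (Some -` U)" "x0 \<in> Some -` U"
    using U Some by (auto simp: openin_P1top P1open_def)
  then obtain e where e: "e > 0" "ball x0 e \<subseteq> Some -` U" by (meson open_contains_ball)
  have "chart_at p t \<in> U" if "\<bar>t\<bar> < e" for t
    using that e(2) Some by (auto simp: dist_norm subset_iff)
  then show ?thesis using e(1) unfolding eventually_at by (auto simp: dist_norm)
qed

lemma chart_at_ball_nhd:
  assumes "r > 0"
  obtains V where "openin P1top V" "p \<in> V" "\<And>t. chart_at p t \<in> V \<longleftrightarrow> \<bar>t\<bar> < r"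
    "V \<subseteq> range (chart_at p)"
proof (cases p)
  case (Some x0)
  show ?thesis
  proof (rule that[of "Some ` ball x0 r"])
    show "openin P1top (Some ` ball x0 r)" by (intro openin_P1top_Some_image) auto
    show "chart_at p t \<in> Some ` ball x0 r \<longleftrightarrow> \<bar>t\<bar> < r" for t
      using Some by (auto simp: dist_norm)
    show "Some ` ball x0 r \<subseteq> range (chart_at p)"
    proof
      fix x assume "x \<in> Some ` ball x0 r"
      then obtain y where "x = Some y" by blast
      then show "x \<in> range (chart_at p)" using Some by (auto intro!: range_eqI[of _ _ "y - x0"])
    qed
  qed (use Some assms in auto)
next
  case None
  show ?thesis
  proof (rule that[of "- Some ` cball (0::real) (1/r)"])
    show "openin P1top (- Some ` cball (0::real) (1/r))" by (intro openin_P1top_compl_Some_image) auto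
    show "chart_at p t \<in> - Some ` cball (0::real) (1/r) \<longleftrightarrow> \<bar>t\<bar> < r" for t
    proof (cases "t = 0")
      case False
      have "\<bar>1/t\<bar> > 1/r \<longleftrightarrow> \<bar>t\<bar> < r"
        using False assms inverse_less_iff_less[of r "\<bar>t\<bar>"] by (simp add: abs_divide inverse_eq_divide)
      then show ?thesis using None False by auto
    qed (use None assms in auto)
    show "- Some ` cball (0::real) (1/r) \<subseteq> range (chart_at p)"
    proof
      fix x assume x: "x \<in> - Some ` cball (0::real) (1/r)"
      show "x \<in> range (chart_at p)"
      proof (cases x)
        case (Some z)
        then have "z \<noteq> 0" using x assms by auto
        then show ?thesis using Some None by (intro range_eqI[of _ _ "-1/z"]) simp
      qed (use None in \<open>auto intro!: range_eqI[of _ _ 0]\<close>)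
    qed
  qed (use None in auto)
qed

definition one_sided :: "real filter \<Rightarrow> bool" where
  "one_sided F \<longleftrightarrow> F = at_left 0 \<or> F = at_right 0"

lemma one_sided_le_at_0: "one_sided F \<Longrightarrow> F \<le> at 0"
  by (auto simp: one_sided_def at_le)

lemma one_sided_nontrivial: "one_sided F \<Longrightarrow> F \<noteq> bot"
  unfolding one_sided_def
  using trivial_limit_at_left_real[of 0] trivial_limit_at_right_real[of 0] by metis

lemma one_sided_tendsto_ident: "one_sided F \<Longrightarrow> ((\<lambda>t. t) \<longlongrightarrow> 0) F"
  by (auto simp: one_sided_def intro: tendsto_ident_at)

lemma one_sided_eventually_nonzero: "one_sided F \<Longrightarrow> eventually (\<lambda>t. t \<noteq> 0) F"
  by (auto simp: one_sided_def eventually_at_filter)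

lemma one_sided_eventually_affine_nonzero:
  assumes "C \<noteq> 0 \<or> D \<noteq> 0" "one_sided F"
  shows "eventually (\<lambda>t::real. C*t + D \<noteq> 0) F"
proof (cases "D = 0")
  case True
  then show ?thesis
    using assms one_sided_eventually_nonzero by (auto elim: eventually_mono)
next
  case False
  have "((\<lambda>t. C*t + D) \<longlongrightarrow> C*0 + D) F"
    by (intro tendsto_intros one_sided_tendsto_ident assms(2))
  then show ?thesis using False by (simp add: tendsto_imp_eventually_ne)
qed

text \<open>A connected set cannot contain and avoid points of the chart in alternation: the two
  avoided points \<open>s, u\<close> cut the circle into two arcs, one through \<open>v\<close> and one through \<open>w\<close>.\<close>

lemma connectedin_chart_at_no_alternation:
  assumes I: "connectedin P1top I" and "s < v" "v < u"
    and w: "(0 < s \<and> u < w) \<or> (w < s \<and> u < 0)"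
    and out: "chart_at p s \<notin> I" "chart_at p u \<notin> I"
    and inside: "chart_at p v \<in> I" "chart_at p w \<in> I"
  shows False
proof -
  have nz: "s \<noteq> 0" "u \<noteq> 0" "v \<noteq> 0" "w \<noteq> 0" using assms(2,3) w by auto
  define \<alpha> where "\<alpha> = chart_coord p s"
  define \<beta> where "\<beta> = chart_coord p u"
  define E1 where "E1 = Some ` {\<alpha><..<\<beta>}"
  define E2 where "E2 = - Some ` {\<alpha>..\<beta>}"
  have "openin P1top E1" unfolding E1_def by (intro openin_P1top_Some_image) auto
  moreover have "openin P1top E2" unfolding E2_def by (intro openin_P1top_compl_Some_image) auto
  moreover have "I \<subseteq> E1 \<union> E2"
  proof
    fix x assume x: "x \<in> I"
    have "Some \<alpha> \<notin> I" "Some \<beta> \<notin> I"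
      using out nz by (simp_all add: \<alpha>_def \<beta>_def chart_at_nonzero)
    show "x \<in> E1 \<union> E2"
    proof (cases "x \<in> E2")
      case False
      then obtain y where y: "x = Some y" "\<alpha> \<le> y" "y \<le> \<beta>" by (auto simp: E2_def)
      moreover have "y \<noteq> \<alpha>" "y \<noteq> \<beta>" using x y(1) \<open>Some \<alpha> \<notin> I\<close> \<open>Some \<beta> \<notin> I\<close> by auto
      ultimately show ?thesis by (simp add: E1_def)
    qed (rule UnI2)
  qed
  moreover have "E1 \<inter> E2 \<inter> I = {}" unfolding E1_def E2_def by auto
  moreover have "chart_at p v \<in> E1"
  proof -
    have "\<alpha> < chart_coord p v" "chart_coord p v < \<beta>"
      unfolding \<alpha>_def \<beta>_def using assms(2,3) w by (auto intro!: chart_coord_less)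
    then show ?thesis using nz by (simp add: E1_def chart_at_nonzero)
  qed
  moreover have "chart_at p w \<in> E2"
  proof -
    have "chart_coord p w < \<alpha> \<or> \<beta> < chart_coord p w"
      unfolding \<alpha>_def \<beta>_def using assms(2,3) w by (auto intro!: chart_coord_less)
    then show ?thesis using nz by (auto simp: E2_def chart_at_nonzero)
  qed
  ultimately show False using I inside unfolding connectedin by blast
qed

lemma connectedin_eventually_in_or_out:
  assumes I: "connectedin P1top I" and F: "one_sided F"
  shows "eventually (\<lambda>t. chart_at p t \<in> I) F \<or> eventually (\<lambda>t. chart_at p t \<notin> I) F"
proof (rule ccontr)
  assume c: "\<not> ?thesis"
  show False using F unfolding one_sided_def
  proof
    assume F: "F = at_right 0"
    have A: "\<forall>b>0. \<exists>y>0. y < b \<and> chart_at p y \<notin> I"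
      and B: "\<forall>b>0. \<exists>y>0. y < b \<and> chart_at p y \<in> I"
      using c unfolding F eventually_at_right_field by auto
    obtain t1 where t1: "t1 > 0" "chart_at p t1 \<in> I" using B by (meson zero_less_one)
    obtain t2 where t2: "t2 > 0" "t2 < t1" "chart_at p t2 \<notin> I" using A t1 by blast
    obtain t3 where t3: "t3 > 0" "t3 < t2" "chart_at p t3 \<in> I" using B t2 by blast
    obtain t4 where t4: "t4 > 0" "t4 < t3" "chart_at p t4 \<notin> I" using A t3 by blast
    show False
      using connectedin_chart_at_no_alternation[OF I t4(2) t3(2) _ t4(3) t2(3) t3(3) t1(2)] t4 t2
      by auto
  next
    assume F: "F = at_left 0"
    have A: "\<forall>b<0. \<exists>y>b. y < 0 \<and> chart_at p y \<notin> I"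
      and B: "\<forall>b<0. \<exists>y>b. y < 0 \<and> chart_at p y \<in> I"
      using c unfolding F eventually_at_left_field by auto
    obtain t1 where t1: "t1 < 0" "chart_at p t1 \<in> I" using B by (meson neg_less_0_iff_less zero_less_one)
    obtain t2 where t2: "t2 > t1" "t2 < 0" "chart_at p t2 \<notin> I" using A t1 by blast
    obtain t3 where t3: "t3 > t2" "t3 < 0" "chart_at p t3 \<in> I" using B t2 by blast
    obtain t4 where t4: "t4 > t3" "t4 < 0" "chart_at p t4 \<notin> I" using A t3 by blast
    show False
      using connectedin_chart_at_no_alternation[OF I t3(1) t4(1) _ t2(3) t4(3) t3(3) t1(2)] t4 t2
      by auto
  qed
qed

lemma finite_connected_cover_eventually_in:
  assumes "finite \<I>" "\<Union>\<I> = UNIV" "\<And>I. I \<in> \<I> \<Longrightarrow> connectedin P1top I" "one_sided F"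
  obtains I where "I \<in> \<I>" "eventually (\<lambda>t. chart_at p t \<in> I) F"
proof -
  have "eventually (\<lambda>t. False) F" if "\<forall>I\<in>\<I>. \<not> eventually (\<lambda>t. chart_at p t \<in> I) F"
  proof -
    have "\<forall>I\<in>\<I>. eventually (\<lambda>t. chart_at p t \<notin> I) F"
      using that connectedin_eventually_in_or_out assms(3,4) by blast
    then have "eventually (\<lambda>t. \<forall>I\<in>\<I>. chart_at p t \<notin> I) F"
      using assms(1) by (simp add: eventually_ball_finite)
    then show ?thesis by eventually_elim (use assms(2) in auto)
  qed
  then show ?thesis using that one_sided_nontrivial[OF assms(4)] by auto
qed

lemma mobius_conj_chart_at:
  assumes "a*d - b*c = 1"
  obtains A B C D where "A*D - B*C = 1"
    "\<And>t. C*t + D \<noteq> 0 \<Longrightarrow> mobius a b c d (chart_at p t) = chart_at p ((A*t + B) / (C*t + D))"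
proof (cases p)
  case (Some x0)
  define A where "A = a - c*x0"
  define B where "B = a*x0 + b - x0*(c*x0 + d)"
  define C where "C = c"
  define D where "D = c*x0 + d"
  have "A*D - B*C = 1" using assms by (simp add: A_def B_def C_def D_def algebra_simps)
  moreover have "mobius a b c d (chart_at p t) = chart_at p ((A*t + B) / (C*t + D))"
    if "C*t + D \<noteq> 0" for t
  proof -
    have "c*(x0 + t) + d \<noteq> 0" using that by (simp add: A_def B_def C_def D_def algebra_simps)
    then show ?thesis using that Some by (simp add: A_def B_def C_def D_def mobius_def field_simps)
  qed
  ultimately show ?thesis by (rule that)
next
  case None
  have "d*a - (-c)*(-b) = 1" using assms by (simp add: algebra_simps)
  moreover have "mobius a b c d (chart_at p t) = chart_at p ((d*t + -c) / (-b*t + a))"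
    if "-b*t + a \<noteq> 0" for t
  proof (cases "t = 0")
    case True
    then show ?thesis using None that by (simp add: mobius_def)
  next
    case False
    have "c*(-1/t) + d = (d*t - c)/t" using False by (simp add: field_simps)
    then show ?thesis using None that False by (simp add: mobius_def field_simps)
  qed
  ultimately show ?thesis by (rule that)
qed

definition mobius0 :: "real \<Rightarrow> real \<Rightarrow> real \<Rightarrow> real \<Rightarrow> real" where
  "mobius0 A C D t = A*t / (C*t + D)"

definition has_germ :: "P1 \<Rightarrow> real filter \<Rightarrow> (P1 \<Rightarrow> P1) \<Rightarrow> (real \<Rightarrow> real) \<Rightarrow> bool" where
  "has_germ p F h \<phi> \<longleftrightarrow> eventually (\<lambda>t. h (chart_at p t) = chart_at p (\<phi> t)) F"

lemma mobius0_comp: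
  assumes "C2*t + D2 \<noteq> 0"
  shows "mobius0 A1 C1 D1 (mobius0 A2 C2 D2 t) = mobius0 (A1*A2) (C1*A2 + D1*C2) (D1*D2) t"
proof -
  have "C1 * (A2*t / (C2*t + D2)) + D1 = ((C1*A2 + D1*C2)*t + D1*D2) / (C2*t + D2)"
    using assms by (simp add: field_simps)
  moreover have "(X / k) / (Y / k) = X / Y" if "k \<noteq> 0" for X Y k :: real
    using that by (cases "Y = 0") (simp_all add: field_simps)
  ultimately show ?thesis unfolding mobius0_def using assms by (simp add: mult.assoc)
qed

lemma filterlim_mobius0:
  assumes "A*D = 1" "one_sided F"
  shows "filterlim (mobius0 A C D) F F"
proof -
  have D: "D \<noteq> 0" using assms(1) by auto
  have lim: "(mobius0 A C D \<longlongrightarrow> A*0 / (C*0 + D)) F"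
    unfolding mobius0_def using D by (intro tendsto_intros one_sided_tendsto_ident assms(2)) auto
  have "((\<lambda>t. A / (C*t + D)) \<longlongrightarrow> A / (C*0 + D)) F"
    using D by (intro tendsto_intros one_sided_tendsto_ident assms(2)) auto
  moreover have "A / D > 0" using assms(1)
    by (metis divide_pos_pos mult_pos_pos not_less_iff_gr_or_eq zero_less_divide_iff zero_less_mult_iff zero_less_one)
  ultimately have pos: "eventually (\<lambda>t. A / (C*t + D) > 0) F"
    by (simp add: order_tendstoD(1))
  have factor: "mobius0 A C D t = t * (A / (C*t + D))" for t by (simp add: mobius0_def)
  show ?thesis using assms(2) unfolding one_sided_def
  proof
    assume F: "F = at_left 0"
    have "eventually (\<lambda>t::real. t < 0) F" using F by (simp add: eventually_at_filter)
    with pos have "eventually (\<lambda>t. mobius0 A C D t \<in> {..<0} \<and> mobius0 A C D t \<noteq> 0) F"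
    proof eventually_elim
      case (elim t)
      then have "t * (A / (C*t + D)) < 0" by (intro mult_neg_pos) auto
      then show ?case by (metis factor lessThan_iff less_irrefl)
    qed
    then show ?thesis using lim F by (simp add: filterlim_at)
  next
    assume F: "F = at_right 0"
    have "eventually (\<lambda>t::real. t > 0) F" using F by (simp add: eventually_at_filter)
    with pos have "eventually (\<lambda>t. mobius0 A C D t \<in> {0<..} \<and> mobius0 A C D t \<noteq> 0) F"
    proof eventually_elim
      case (elim t)
      then have "t * (A / (C*t + D)) > 0" by (intro mult_pos_pos) auto
      then show ?case by (metis factor greaterThan_iff less_irrefl)
    qed
    then show ?thesis using lim F by (simp add: filterlim_at)
  qed
qed

lemma has_germ_cong:
  assumes "has_germ p F h \<phi>" "eventually (\<lambda>t. \<phi> t = \<psi> t) F"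
  shows "has_germ p F h \<psi>"
  using assms unfolding has_germ_def by eventually_elim simp

lemma has_germ_comp:
  assumes "has_germ p F h1 \<phi>1" "has_germ p F h2 \<phi>2" "filterlim \<phi>2 F F"
  shows "has_germ p F (h1 \<circ> h2) (\<phi>1 \<circ> \<phi>2)"
proof -
  have "eventually (\<lambda>t. h1 (chart_at p (\<phi>2 t)) = chart_at p (\<phi>1 (\<phi>2 t))) F"
    using eventually_compose_filterlim[OF assms(1)[unfolded has_germ_def] assms(3)] .
  with assms(2) show ?thesis
    unfolding has_germ_def by eventually_elim simp
qed

lemma has_germ_comp_mobius0:
  assumes "has_germ p F h1 (mobius0 A1 C1 D1)" "has_germ p F h2 (mobius0 A2 C2 D2)"
    and "A2*D2 = 1" "one_sided F"
  shows "has_germ p F (h1 \<circ> h2) (mobius0 (A1*A2) (C1*A2 + D1*C2) (D1*D2))"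
proof (rule has_germ_cong)
  show "has_germ p F (h1 \<circ> h2) (mobius0 A1 C1 D1 \<circ> mobius0 A2 C2 D2)"
    by (rule has_germ_comp[OF assms(1,2) filterlim_mobius0[OF assms(3,4)]])
  have "eventually (\<lambda>t. C2*t + D2 \<noteq> 0) F"
    using assms(3,4) by (intro one_sided_eventually_affine_nonzero) auto
  then show "eventually (\<lambda>t. (mobius0 A1 C1 D1 \<circ> mobius0 A2 C2 D2) t =
      mobius0 (A1*A2) (C1*A2 + D1*C2) (D1*D2) t) F"
    by eventually_elim (simp add: mobius0_comp)
qed

lemma has_germ_inv_into:
  assumes "bij h" "A*D = 1" "has_germ p F h (mobius0 A C D)" "one_sided F"
  shows "has_germ p F (inv_into UNIV h) (mobius0 D (-C) A)"
proof -
  have DA: "D*A = 1" using assms(2) by (simp add: mult.commute)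
  have "eventually (\<lambda>t. h (chart_at p (mobius0 D (-C) A t)) =
      chart_at p (mobius0 A C D (mobius0 D (-C) A t))) F"
    using eventually_compose_filterlim[OF assms(3)[unfolded has_germ_def] filterlim_mobius0[OF DA assms(4)]] .
  moreover have "eventually (\<lambda>t. -C*t + A \<noteq> 0) F"
    using DA assms(4) by (intro one_sided_eventually_affine_nonzero) auto
  ultimately show ?thesis unfolding has_germ_def
  proof eventually_elim
    case (elim t)
    have "mobius0 A C D (mobius0 D (-C) A t) = t"
      using elim(2) assms(2) by (simp add: mobius0_comp) (simp add: mobius0_def mult.commute)
    then have "h (chart_at p (mobius0 D (-C) A t)) = chart_at p t" using elim(1) by simp
    then show ?case using assms(1) by (metis bij_def inv_f_eq)
  qed
qed

lemma has_germ_commutator: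
  assumes "bij x" "bij y" "A*D = 1" "A'*D' = 1" "one_sided F"
    and "has_germ p F x (mobius0 A C D)" "has_germ p F y (mobius0 A' C' D')"
  shows "has_germ p F (x \<circ> y \<circ> inv_into UNIV x \<circ> inv_into UNIV y)
    (mobius0 1 (C*D*(1 - D'^2) + C'*D'*(D^2 - 1)) 1)"
proof -
  have "D*A = 1" "D'*A' = 1" using assms(3,4) by (simp_all add: mult.commute)
  then have germ: "has_germ p F (x \<circ> y \<circ> inv_into UNIV x \<circ> inv_into UNIV y)
      (mobius0 (A*A'*D*D') (((C*A' + D*C')*D + D*D'*(-C))*D' + D*D'*A*(-C')) (D*D'*A*A'))"
    by (intro has_germ_comp_mobius0 has_germ_inv_into assms)
  have "A*A'*D*D' = (A*D)*(A'*D')" "D*D'*A*A' = (A*D)*(A'*D')"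
    by (simp_all add: algebra_simps)
  then have diagonal: "A*A'*D*D' = 1" "D*D'*A*A' = 1"
    using assms(3,4) by simp_all
  have "((C*A' + D*C')*D + D*D'*(-C))*D' + D*D'*A*(-C') =
      C*D*(A'*D') + C'*D'*D^2 - C*D*D'^2 - C'*D'*(A*D)"
    by (simp add: algebra_simps power2_eq_square)
  then have off_diagonal:
    "((C*A' + D*C')*D + D*D'*(-C))*D' + D*D'*A*(-C') = C*D*(1 - D'^2) + C'*D'*(D^2 - 1)"
    using assms(3,4) by (simp add: algebra_simps)
  show ?thesis using germ by (simp only: diagonal off_diagonal)
qed

lemma has_germ_tendsto_0:
  assumes "continuous_map P1top P1top f" "f p = p" "F \<le> at 0" "has_germ p F f \<psi>"
  shows "(\<psi> \<longlongrightarrow> 0) F"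
  unfolding tendsto_iff
proof (intro allI impI)
  fix r :: real assume "r > 0"
  then obtain V where V: "openin P1top V" "p \<in> V" "\<And>t. chart_at p t \<in> V \<longleftrightarrow> \<bar>t\<bar> < r"
    using chart_at_ball_nhd[of r p] by metis
  have "openin P1top (f -` V)"
    using assms(1) V(1) by (simp add: continuous_map_def topspace_P1top vimage_def)
  then have "eventually (\<lambda>t. chart_at p t \<in> f -` V) (at 0)"
    using V(2) assms(2) by (intro eventually_chart_at_in) auto
  then have "eventually (\<lambda>t. chart_at p t \<in> f -` V) F" by (rule filter_leD[OF assms(3)])
  with assms(4) show "eventually (\<lambda>t. dist (\<psi> t) 0 < r) F"
    unfolding has_germ_def by eventually_elim (use V(3) in auto)
qed

lemma fractional_linear_tendsto_0:
  assumes "A*D - B*C = 1" "one_sided F" "((\<lambda>t. (A*t + B) / (C*t + D)) \<longlongrightarrow> 0) F"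
  shows "B = 0"
proof -
  have "((\<lambda>t. (A*t + B) / (C*t + D) * (C*t + D)) \<longlongrightarrow> 0 * (C*0 + D)) F"
    by (intro tendsto_intros assms(3) one_sided_tendsto_ident assms(2))
  then have lim: "((\<lambda>t. (A*t + B) / (C*t + D) * (C*t + D)) \<longlongrightarrow> 0) F" by simp
  have "eventually (\<lambda>t. C*t + D \<noteq> 0) F"
    using assms(1,2) by (intro one_sided_eventually_affine_nonzero) auto
  then have "eventually (\<lambda>t. (A*t + B) / (C*t + D) * (C*t + D) = A*t + B) F"
    by eventually_elim simp
  with lim have "((\<lambda>t. A*t + B) \<longlongrightarrow> 0) F"
    by (rule Lim_transform_eventually)
  moreover have "((\<lambda>t. A*t + B) \<longlongrightarrow> A*0 + B) F"
    by (intro tendsto_intros one_sided_tendsto_ident assms(2))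
  ultimately have "0 = A*0 + B"
    by (rule tendsto_unique[OF one_sided_nontrivial[OF assms(2)]])
  then show "B = 0" by simp
qed

text \<open>On a one-sided neighbourhood of \<open>p\<close> an element of \<open>G\<close> agrees with a single piece, a
  projective map; continuity at the fixed point \<open>p\<close> forces it to fix \<open>p\<close>, i.e. \<open>B = 0\<close>.\<close>

lemma PPgroup_has_mobius0_germ:
  assumes f: "f \<in> PPgroup" "f p = p" and F: "one_sided F"
  obtains A C D where "A*D = 1" "has_germ p F f (mobius0 A C D)"
proof -
  obtain \<I> where \<I>: "finite \<I>" "\<Union>\<I> = UNIV"
      "\<forall>I\<in>\<I>. P1interval I \<and> (\<exists>\<phi>\<in>PSL2. \<forall>x\<in>I. f x = \<phi> x)"
    using f(1) by (auto simp: PPgroup_def)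
  have "connectedin P1top I" if "I \<in> \<I>" for I
    using that \<I>(3) by (auto simp: P1interval_def)
  then obtain I where I: "I \<in> \<I>" "eventually (\<lambda>t. chart_at p t \<in> I) F"
    using finite_connected_cover_eventually_in[OF \<I>(1,2) _ F] by blast
  obtain a b c d where abcd: "a*d - b*c = 1" "\<forall>x\<in>I. f x = mobius a b c d x"
    using \<I>(3) I(1) by (auto simp: PSL2_def)
  obtain A B C D where ABCD: "A*D - B*C = 1"
    "\<And>t. C*t + D \<noteq> 0 \<Longrightarrow> mobius a b c d (chart_at p t) = chart_at p ((A*t + B) / (C*t + D))"
    by (rule mobius_conj_chart_at[OF abcd(1), of p]) (rule that)
  have "eventually (\<lambda>t. C*t + D \<noteq> 0) F"
    using ABCD(1) F by (intro one_sided_eventually_affine_nonzero) auto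
  with I(2) have germ: "has_germ p F f (\<lambda>t. (A*t + B) / (C*t + D))"
    unfolding has_germ_def by eventually_elim (use abcd(2) ABCD(2) in auto)
  have "continuous_map P1top P1top f"
    using f(1) by (simp add: PPgroup_def homeomorphic_imp_continuous_map)
  then have "((\<lambda>t. (A*t + B) / (C*t + D)) \<longlongrightarrow> 0) F"
    by (rule has_germ_tendsto_0[OF _ f(2) one_sided_le_at_0[OF F] germ])
  then have "B = 0" by (rule fractional_linear_tendsto_0[OF ABCD(1) F])
  then have "A*D = 1" "(\<lambda>t. (A*t + B) / (C*t + D)) = mobius0 A C D"
    using ABCD(1) by (auto simp: mobius0_def)
  then show ?thesis using that germ by metis
qed

text \<open>A germ determines its matrix only up to sign, hence the existential.\<close>

definition mobius_germs :: "P1 \<Rightarrow> (real \<Rightarrow> real \<Rightarrow> real \<Rightarrow> bool) \<Rightarrow> (P1 \<Rightarrow> P1) set" where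
  "mobius_germs p P = {h. bij h \<and> h p = p \<and> (\<forall>F. one_sided F \<longrightarrow>
     (\<exists>A C D. A*D = 1 \<and> P A C D \<and> has_germ p F h (mobius0 A C D)))}"

lemma mobius_germsD:
  assumes "h \<in> mobius_germs p P" "one_sided F"
  obtains A C D where "A*D = 1" "P A C D" "has_germ p F h (mobius0 A C D)"
  using assms unfolding mobius_germs_def by blast

lemma subgroup_mobius_germs:
  assumes mult: "\<And>A1 C1 D1 A2 C2 D2. A1*D1 = 1 \<Longrightarrow> A2*D2 = 1 \<Longrightarrow> P A1 C1 D1 \<Longrightarrow> P A2 C2 D2 \<Longrightarrow>
      P (A1*A2) (C1*A2 + D1*C2) (D1*D2)"
    and inverse: "\<And>A C D. A*D = 1 \<Longrightarrow> P A C D \<Longrightarrow> P D (-C) A"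
    and one: "P 1 0 1"
  shows "subgroup (mobius_germs p P) SymP1"
proof (rule subgroup_SymP1I)
  show "bij h" if "h \<in> mobius_germs p P" for h
    using that by (simp add: mobius_germs_def)
  have "\<exists>A C D. A*D = 1 \<and> P A C D \<and> has_germ p F id (mobius0 A C D)" for F
    using one by (intro exI[of _ 1] exI[of _ 0]) (simp add: has_germ_def mobius0_def)
  then show "id \<in> mobius_germs p P"
    unfolding mobius_germs_def by simp
  show "h \<circ> k \<in> mobius_germs p P" if hk: "h \<in> mobius_germs p P" "k \<in> mobius_germs p P" for h k
    unfolding mobius_germs_def
  proof (intro CollectI conjI allI impI)
    show "bij (h \<circ> k)" "(h \<circ> k) p = p" using hk by (auto simp: mobius_germs_def bij_comp)
    fix F :: "real filter" assume F: "one_sided F"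
    obtain A1 C1 D1 where 1: "A1*D1 = 1" "P A1 C1 D1" "has_germ p F h (mobius0 A1 C1 D1)"
      using hk(1) F by (rule mobius_germsD)
    obtain A2 C2 D2 where 2: "A2*D2 = 1" "P A2 C2 D2" "has_germ p F k (mobius0 A2 C2 D2)"
      using hk(2) F by (rule mobius_germsD)
    have "(A1*A2)*(D1*D2) = (A1*D1)*(A2*D2)" by (simp add: algebra_simps)
    then show "\<exists>A C D. A*D = 1 \<and> P A C D \<and> has_germ p F (h \<circ> k) (mobius0 A C D)"
      using has_germ_comp_mobius0[OF 1(3) 2(3) 2(1) F] mult[OF 1(1) 2(1) 1(2) 2(2)] 1(1) 2(1)
      by fastforce
  qed
  show "inv_into UNIV h \<in> mobius_germs p P" if h: "h \<in> mobius_germs p P" for h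
    unfolding mobius_germs_def
  proof (intro CollectI conjI allI impI)
    have "bij h" "h p = p" using h by (auto simp: mobius_germs_def)
    then show "bij (inv_into UNIV h)" "inv_into UNIV h p = p"
      by (simp_all add: bij_imp_bij_inv bij_inv_into_fixed)
    fix F :: "real filter" assume F: "one_sided F"
    obtain A C D where 1: "A*D = 1" "P A C D" "has_germ p F h (mobius0 A C D)"
      using h F by (rule mobius_germsD)
    have "D*A = 1" using 1(1) by (simp add: mult.commute)
    then show "\<exists>A C D. A*D = 1 \<and> P A C D \<and> has_germ p F (inv_into UNIV h) (mobius0 A C D)"
      using has_germ_inv_into[OF \<open>bij h\<close> 1(1) 1(3) F] inverse[OF 1(1,2)] by blast
  qed
qed

lemma commutator_in_mobius_germs:
  assumes "x \<in> mobius_germs p P" "y \<in> mobius_germs p P"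
    and "\<And>A C D A' C' D'. A*D = 1 \<Longrightarrow> A'*D' = 1 \<Longrightarrow> P A C D \<Longrightarrow> P A' C' D' \<Longrightarrow>
      Q 1 (C*D*(1 - D'^2) + C'*D'*(D^2 - 1)) 1"
  shows "x \<circ> y \<circ> inv_into UNIV x \<circ> inv_into UNIV y \<in> mobius_germs p Q"
  unfolding mobius_germs_def
proof (intro CollectI conjI allI impI)
  have "bij x" "x p = p" "bij y" "y p = p" using assms(1,2) by (auto simp: mobius_germs_def)
  then show "bij (x \<circ> y \<circ> inv_into UNIV x \<circ> inv_into UNIV y)"
      "(x \<circ> y \<circ> inv_into UNIV x \<circ> inv_into UNIV y) p = p"
    by (simp_all add: bij_comp bij_imp_bij_inv bij_inv_into_fixed)
  fix F :: "real filter" assume F: "one_sided F"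
  obtain A C D where 1: "A*D = 1" "P A C D" "has_germ p F x (mobius0 A C D)"
    using assms(1) F by (rule mobius_germsD)
  obtain A' C' D' where 2: "A'*D' = 1" "P A' C' D'" "has_germ p F y (mobius0 A' C' D')"
    using assms(2) F by (rule mobius_germsD)
  show "\<exists>A C D. A*D = 1 \<and> Q A C D \<and>
      has_germ p F (x \<circ> y \<circ> inv_into UNIV x \<circ> inv_into UNIV y) (mobius0 A C D)"
    using has_germ_commutator[OF \<open>bij x\<close> \<open>bij y\<close> 1(1) 2(1) F 1(3) 2(3)] assms(3)[OF 1(1) 2(1) 1(2) 2(2)]
    by (intro exI[of _ 1] exI[of _ "C*D*(1 - D'^2) + C'*D'*(D^2 - 1)"]) simp
qed

definition trivial_near :: "P1 \<Rightarrow> (P1 \<Rightarrow> P1) set" where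
  "trivial_near p = {h. bij h \<and> (\<exists>U. openin P1top U \<and> p \<in> U \<and> (\<forall>x\<in>U. h x = x))}"

lemma subgroup_trivial_near: "subgroup (trivial_near p) SymP1"
proof (rule subgroup_SymP1I)
  show "bij h" if "h \<in> trivial_near p" for h using that by (simp add: trivial_near_def)
  show "id \<in> trivial_near p"
  proof -
    have "openin P1top UNIV" using openin_topspace[of P1top] by (simp add: topspace_P1top)
    then show ?thesis unfolding trivial_near_def by (auto intro!: exI[of _ UNIV])
  qed
  show "h \<circ> k \<in> trivial_near p" if hk: "h \<in> trivial_near p" "k \<in> trivial_near p" for h k
  proof -
    obtain U where "openin P1top U" "p \<in> U" "\<forall>x\<in>U. h x = x" "bij h"
      using hk(1) by (auto simp: trivial_near_def)
    moreover obtain V where "openin P1top V" "p \<in> V" "\<forall>x\<in>V. k x = x" "bij k"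
      using hk(2) by (auto simp: trivial_near_def)
    ultimately show ?thesis unfolding trivial_near_def by (auto intro!: exI[of _ "U \<inter> V"] bij_comp)
  qed
  show "inv_into UNIV h \<in> trivial_near p" if h: "h \<in> trivial_near p" for h
  proof -
    obtain U where "openin P1top U" "p \<in> U" "\<forall>x\<in>U. h x = x" "bij h"
      using h by (auto simp: trivial_near_def)
    then show ?thesis unfolding trivial_near_def by (auto simp: bij_imp_bij_inv bij_inv_into_fixed)
  qed
qed

lemma mobius_germs_identity_subset_trivial_near:
  "mobius_germs p (\<lambda>A C D. A = 1 \<and> C = 0 \<and> D = 1) \<subseteq> trivial_near p"
proof
  fix h assume h: "h \<in> mobius_germs p (\<lambda>A C D. A = 1 \<and> C = 0 \<and> D = 1)"
  have "eventually (\<lambda>t. h (chart_at p t) = chart_at p t) F" if "one_sided F" for F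
    using mobius_germsD[OF h that] by (auto simp: has_germ_def mobius0_def)
  then have "eventually (\<lambda>t. h (chart_at p t) = chart_at p t) (at 0)"
    unfolding eventually_at_split by (auto simp: one_sided_def)
  then obtain r where r: "r > 0" "\<And>t. t \<noteq> 0 \<Longrightarrow> \<bar>t\<bar> < r \<Longrightarrow> h (chart_at p t) = chart_at p t"
    unfolding eventually_at by (auto simp: dist_norm)
  obtain V where V: "openin P1top V" "p \<in> V" "\<And>t. chart_at p t \<in> V \<longleftrightarrow> \<bar>t\<bar> < r"
    "V \<subseteq> range (chart_at p)"
    using chart_at_ball_nhd[OF r(1)] by blast
  have "h p = p" using h by (simp add: mobius_germs_def)
  have "h x = x" if x: "x \<in> V" for x
  proof -
    obtain t where t: "x = chart_at p t" using x V(4) by blast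
    then have "\<bar>t\<bar> < r" using x V(3) by blast
    then show ?thesis using t r(2) \<open>h p = p\<close> by (cases "t = 0") auto
  qed
  then show "h \<in> trivial_near p"
    using V(1,2) h by (auto simp: trivial_near_def mobius_germs_def)
qed

lemma PPgroup_fixing_in_mobius_germs:
  assumes "f \<in> PPgroup" "f p = p"
  shows "f \<in> mobius_germs p (\<lambda>_ _ _. True)"
proof -
  have "homeomorphic_map P1top P1top f" using assms(1) by (simp add: PPgroup_def)
  then have "bij f"
    using homeomorphic_imp_injective_map homeomorphic_imp_surjective_map
    by (metis bij_def topspace_P1top)
  moreover have "\<exists>A C D. A*D = 1 \<and> has_germ p F f (mobius0 A C D)" if "one_sided F" for F
    using PPgroup_has_mobius0_germ[OF assms that] by metis
  ultimately show ?thesis using assms(2) by (simp add: mobius_germs_def)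
qed

theorem lemma1:
  fixes f g :: "P1 \<Rightarrow> P1" and p :: P1
  assumes "f \<in> Hgroup" and "g \<in> Hgroup"
    and "f p = p" and "g p = p"
  shows "\<forall>h \<in> derived SymP1 (derived SymP1 (generate SymP1 {f, g})).
           \<exists>U. openin P1top U \<and> p \<in> U \<and> (\<forall>x\<in>U. h x = x)"
proof -
  let ?all = "mobius_germs p (\<lambda>_ _ _. True)"
  let ?unipotent = "mobius_germs p (\<lambda>A C D. A = 1 \<and> D = 1)"
  have "f \<in> ?all" "g \<in> ?all"
    using assms by (simp_all add: Hgroup_def PPgroup_fixing_in_mobius_germs)
  then have "generate SymP1 {f, g} \<subseteq> ?all"
    by (intro group.generate_subgroup_incl[OF group_BijGroup] subgroup_mobius_germs) auto
  then have "derived SymP1 (generate SymP1 {f, g}) \<subseteq> ?unipotent"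
    by (intro derived_SymP1_subset subgroup_mobius_germs
        commutator_in_mobius_germs[where P = "\<lambda>_ _ _. True"]) (auto simp: mobius_germs_def)
  then have "derived SymP1 (derived SymP1 (generate SymP1 {f, g})) \<subseteq> trivial_near p"
    by (intro derived_SymP1_subset subgroup_trivial_near
        subsetD[OF mobius_germs_identity_subset_trivial_near]
        commutator_in_mobius_germs[where P = "\<lambda>A C D. A = 1 \<and> D = 1"])
      (auto simp: mobius_germs_def)
  then show ?thesis by (auto simp: trivial_near_def)
qed

end
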